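(* In the setting of the addition algorithm, the maps $T^+:\mathbb{R}^V\to\mathbb{R}^V$ and $T^-:\mathbb{R}^V\to\mathbb{R}^V$ are one-to-one and onto. Moreover $T^-(\varphi)=-T^+(-\varphi)$ for all $\varphi\in\mathbb{R}^V$.
   Context: Addition algorithm. Let $G=(V,E)$ be a finite connected graph ($v\sim w$ means $(v,w)\in E$), $\tau:V\to[0,\infty)$, $0<\varepsilon\le1/2$, and fix a total order $\preceq$ on $V$. Let $f:\mathbb{R}\to\mathbb{R}$ be $f(x)=0$ for $|x|\ge1$, $f(x)=(1+x)/\varepsilon$ on $[-1,-1+\varepsilon]$, $f(x)=1$ on $[-1+\varepsilon,1-\varepsilon]$, $f(x)=(1-x)/\varepsilon$ on $[1-\varepsilon,1]$. For $v\in V$, $h,t\in\mathbb{R}$ let $m_{v,h,t}(h')=\min(\tau(v)-t,\varepsilon/2)f(h'-h)+t$ if $\tau(v)\ge t$, and $m_{v,h,t}(h')=t$ if $\tau(v)<t$. On input $\varphi\in\mathbb{R}^V$ the algorithm outputs an ordering $P_1,\dots,P_{|V|}$ of $V$, numbers $s_k$ and functions $\tau_k:V\times\mathbb{R}\to\mathbb{R}$: set $\tau_1(v,h)=\tau(v)$; for $k=1,\dots,|V|$: let $P_k$ be the vertex $v\in V\setminus\{P_1,\dots,P_{k-1}\}$ minimizing $\tau_k(v,\varphi_v)$ (ties broken by taking the $\preceq$-smallest); set $s_k=\tau_k(P_k,\varphi_{P_k})$; if $k<|V|$ set $\tau_{k+1}(v,h)=\tau_k(v,h)$ if $v\in\{P_1,\dots,P_k\}$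 or $v\not\sim P_k$, and $\tau_{k+1}(v,h)=\min(\tau_k(v,h),m_{v,\varphi_{P_k},s_k}(h))$ otherwise. Define $T^+(\varphi)_{P_k}=\varphi_{P_k}+s_k$ ($1\le k\le|V|$) and $T^-(\varphi)=2\varphi-T^+(\varphi)$. *)

theory Defs
  imports Main "HOL.Real"
begin

definition addf :: "real \<Rightarrow> real \<Rightarrow> real" where
  "addf eps x = (if \<bar>x\<bar> \<ge> 1 then 0
      else if x \<le> -1 + eps then (1 + x) / eps
      else if x \<le> 1 - eps then 1
      else (1 - x) / eps)"

definition addm :: "('v \<Rightarrow> real) \<Rightarrow> real \<Rightarrow> 'v \<Rightarrow> real \<Rightarrow> real \<Rightarrow> real \<Rightarrow> real" where
  "addm tau eps v h t h' = (if tau v \<ge> t then min (tau v - t) (eps / 2) * addf eps (h' - h) + t else t)"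

text \<open>State of the algorithm after k steps: the list [P_1,...,P_k], the map P_j \<mapsto> s_j
  (value 0 at vertices not yet chosen), and the function tau_{k+1}.\<close>
type_synonym 'v add_state = "'v list \<times> ('v \<Rightarrow> real) \<times> ('v \<Rightarrow> real \<Rightarrow> real)"

definition add_choose :: "('v \<times> 'v) set \<Rightarrow> ('v \<Rightarrow> real) \<Rightarrow> 'v set \<Rightarrow> ('v \<Rightarrow> real \<Rightarrow> real) \<Rightarrow> 'v" where
  "add_choose ord phi R tk = (THE v. v \<in> R \<and> (\<forall>w\<in>R. tk v (phi v) \<le> tk w (phi w))
        \<and> (\<forall>w\<in>R. tk w (phi w) = tk v (phi v) \<longrightarrow> (v, w) \<in> ord))"

definition add_step :: "('v \<times> 'v) set \<Rightarrow> ('v \<times> 'v) set \<Rightarrow> ('v \<Rightarrow> real) \<Rightarrow> real \<Rightarrow> ('v \<Rightarrow> real)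
    \<Rightarrow> 'v add_state \<Rightarrow> 'v add_state" where
  "add_step E ord tau eps phi st = (case st of (Ps, S, tk) \<Rightarrow>
     (let P = add_choose ord phi (UNIV - set Ps) tk;
          s = tk P (phi P);
          Ps' = Ps @ [P]
      in (Ps', S(P := s),
          (\<lambda>v h. if v \<in> set Ps' \<or> (v, P) \<notin> E then tk v h
                 else min (tk v h) (addm tau eps v (phi P) s h)))))"

definition add_run :: "('v \<times> 'v) set \<Rightarrow> ('v \<times> 'v) set \<Rightarrow> ('v \<Rightarrow> real) \<Rightarrow> real \<Rightarrow> ('v \<Rightarrow> real)
    \<Rightarrow> nat \<Rightarrow> 'v add_state" where
  "add_run E ord tau eps phi k = (add_step E ord tau eps phi ^^ k) ([], (\<lambda>_. 0), (\<lambda>v h. tau v))"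

definition Tplus :: "('v::finite \<times> 'v) set \<Rightarrow> ('v \<times> 'v) set \<Rightarrow> ('v \<Rightarrow> real) \<Rightarrow> real
    \<Rightarrow> ('v \<Rightarrow> real) \<Rightarrow> ('v \<Rightarrow> real)" where
  "Tplus E ord tau eps phi = (\<lambda>v. phi v + fst (snd (add_run E ord tau eps phi (card (UNIV :: 'v set)))) v)"

definition Tminus :: "('v::finite \<times> 'v) set \<Rightarrow> ('v \<times> 'v) set \<Rightarrow> ('v \<Rightarrow> real) \<Rightarrow> real
    \<Rightarrow> ('v \<Rightarrow> real) \<Rightarrow> ('v \<Rightarrow> real)" where
  "Tminus E ord tau eps phi = (\<lambda>v. 2 * phi v - Tplus E ord tau eps phi v)"

end

theory Submission
  imports Defs Complex_Main "HOL-Library.Cardinality"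
begin

(* T^+ is inverted by running the addition algorithm "online" on the output.
   Every tau_k(v, .) is 1/2-Lipschitz, since the bumps m_{v,h,t} have height at most eps/2
   and slope at most 1/eps; hence h |-> h + tau_k(v,h) is an increasing bijection of the
   reals, and a target value psi_v can be decoded into a unique candidate height.  The
   decoding algorithm runs the addition algorithm, feeding it at step k the heights decoded
   from psi with the current tau_k.  Because the s_k are nondecreasing and tau_k only
   decreases in k, the decoding run makes exactly the same choices as the run on phi
   whenever psi = T^+(phi), which gives injectivity; and for arbitrary psi the decoded
   heights phi satisfy T^+(phi) = psi, which gives surjectivity.  Finally f is even, so the
   run on -phi is the reflected run on phi with the same s_k, i.e. T^-(phi) = -T^+(-phi). *)

section \<open>Perturbations of the identity by 1/2-Lipschitz functions\<close>

definition half_lipschitz :: "(real \<Rightarrow> real) \<Rightarrow> bool" where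
  "half_lipschitz f \<longleftrightarrow> (\<forall>a b. \<bar>f a - f b\<bar> \<le> \<bar>a - b\<bar> / 2)"

lemma half_lipschitz_const: "half_lipschitz (\<lambda>_. c)"
  unfolding half_lipschitz_def by simp

lemma half_lipschitz_min:
  assumes "half_lipschitz f" "half_lipschitz g"
  shows "half_lipschitz (\<lambda>h. min (f h) (g h))"
  unfolding half_lipschitz_def
proof (intro allI)
  fix a b
  have "\<bar>f a - f b\<bar> \<le> \<bar>a - b\<bar> / 2" "\<bar>g a - g b\<bar> \<le> \<bar>a - b\<bar> / 2"
    using assms unfolding half_lipschitz_def by auto
  then show "\<bar>min (f a) (g a) - min (f b) (g b)\<bar> \<le> \<bar>a - b\<bar> / 2"
    unfolding min_def abs_le_iff by auto
qed

lemma half_lipschitz_continuous: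
  assumes "half_lipschitz f"
  shows "continuous_on S f"
proof -
  have "isCont f x" for x
    unfolding isCont_def LIM_eq
  proof (intro allI impI)
    fix r :: real
    assume r: "0 < r"
    show "\<exists>s>0. \<forall>y. y \<noteq> x \<and> norm (y - x) < s \<longrightarrow> norm (f y - f x) < r"
    proof (intro exI[of _ r] conjI allI impI)
      fix y
      assume "y \<noteq> x \<and> norm (y - x) < r"
      moreover have "\<bar>f y - f x\<bar> \<le> \<bar>y - x\<bar> / 2"
        using assms unfolding half_lipschitz_def by blast
      ultimately show "norm (f y - f x) < r" using r by simp
    qed (fact r)
  qed
  then show ?thesis by (simp add: continuous_at_imp_continuous_on)
qed

lemma shift_strict_mono:
  assumes "half_lipschitz f"
  shows "strict_mono (\<lambda>h. h + f h)"
proof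
  fix a b :: real
  assume "a < b"
  moreover have "\<bar>f a - f b\<bar> \<le> \<bar>a - b\<bar> / 2"
    using assms unfolding half_lipschitz_def by blast
  ultimately show "a + f a < b + f b" by (simp add: abs_le_iff abs_if split: if_splits)
qed

text \<open>\<dots> and onto, by the intermediate value theorem on \<open>[-2A, 2A]\<close>, \<open>A = |y - f 0|\<close>.\<close>

lemma shift_surj:
  assumes "half_lipschitz f"
  shows "surj (\<lambda>h. h + f h)"
proof -
  have "\<exists>h. y = h + f h" for y
  proof -
    define A where "A = \<bar>y - f 0\<bar>"
    have A: "0 \<le> A" "y - f 0 \<le> A" "- A \<le> y - f 0" unfolding A_def by auto
    have "\<bar>f (- 2 * A) - f 0\<bar> \<le> \<bar>- 2 * A - 0\<bar> / 2" "\<bar>f (2 * A) - f 0\<bar> \<le> \<bar>2 * A - 0\<bar> / 2"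
      using assms unfolding half_lipschitz_def by blast+
    then have "\<bar>f (- 2 * A) - f 0\<bar> \<le> A" "\<bar>f (2 * A) - f 0\<bar> \<le> A"
      using A(1) by simp_all
    then have "- 2 * A + f (- 2 * A) \<le> y" "y \<le> 2 * A + f (2 * A)"
      using A by (auto simp: abs_le_iff)
    moreover have "continuous_on {- 2 * A .. 2 * A} (\<lambda>h. h + f h)"
      using half_lipschitz_continuous[OF assms] by (intro continuous_intros) auto
    ultimately show ?thesis using IVT'[of "\<lambda>h. h + f h" "- 2 * A" y "2 * A"] A(1) by force
  qed
  then show ?thesis by (simp add: surj_def)
qed

definition shift_inv :: "(real \<Rightarrow> real) \<Rightarrow> real \<Rightarrow> real" where
  "shift_inv f = inv (\<lambda>h. h + f h)"

lemma shift_inv_eq: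
  assumes "half_lipschitz f"
  shows "shift_inv f y + f (shift_inv f y) = y"
  using surj_f_inv_f[OF shift_surj[OF assms]] unfolding shift_inv_def .

lemma shift_inv_unique:
  assumes "half_lipschitz f" "h + f h = y"
  shows "shift_inv f y = h"
  unfolding shift_inv_def
  using inv_f_eq[OF strict_mono_imp_inj_on[OF shift_strict_mono[OF assms(1)]] assms(2)] .

lemma shift_inv_le:
  assumes "half_lipschitz f" "y \<le> h + f h"
  shows "shift_inv f y \<le> h"
  using strict_mono_less_eq[OF shift_strict_mono[OF assms(1)], of "shift_inv f y" h]
    shift_inv_eq[OF assms(1), of y] assms(2) by simp

section \<open>The bump functions f and m\<close>

lemma addf_clamp:
  assumes "0 < eps" "eps \<le> 1/2"
  shows "addf eps x = max 0 (min 1 ((1 - \<bar>x\<bar>) / eps))"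
  using assms unfolding addf_def by (auto simp: field_simps abs_if min_def max_def)

lemma addf_even:
  assumes "0 < eps" "eps \<le> 1/2"
  shows "addf eps (- x) = addf eps x"
  using addf_clamp[OF assms] by simp

lemma addf_nonneg:
  assumes "0 < eps" "eps \<le> 1/2"
  shows "0 \<le> addf eps x"
  using addf_clamp[OF assms] by simp

lemma addf_lipschitz:
  assumes "0 < eps" "eps \<le> 1/2"
  shows "\<bar>addf eps a - addf eps b\<bar> \<le> \<bar>a - b\<bar> / eps"
proof -
  have clamp: "\<bar>max 0 (min 1 p) - max 0 (min (1::real) q)\<bar> \<le> \<bar>p - q\<bar>" for p q
    by (auto simp: min_def max_def abs_if)
  have "\<bar>addf eps a - addf eps b\<bar> \<le> \<bar>(1 - \<bar>a\<bar>) / eps - (1 - \<bar>b\<bar>) / eps\<bar>"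
    unfolding addf_clamp[OF assms] by (rule clamp)
  also have "\<dots> = \<bar>\<bar>b\<bar> - \<bar>a\<bar>\<bar> / eps"
    using assms by (simp add: diff_divide_distrib[symmetric] abs_divide)
  also have "\<dots> \<le> \<bar>a - b\<bar> / eps"
    using assms by (intro divide_right_mono) (auto simp: abs_le_iff)
  finally show ?thesis .
qed

lemma addm_ge:
  assumes "0 < eps" "eps \<le> 1/2"
  shows "t \<le> addm tau eps v h0 t h"
  using addf_nonneg[OF assms] assms unfolding addm_def by (auto intro!: mult_nonneg_nonneg)

lemma addm_reflect:
  assumes "0 < eps" "eps \<le> 1/2"
  shows "addm tau eps v (- a) t h = addm tau eps v a t (- h)"
proof -
  have "- h - a = - (h + a)" by simp
  then have "addf eps (- h - a) = addf eps (h + a)" using addf_even[OF assms] by metis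
  then show ?thesis unfolding addm_def by (simp add: add.commute)
qed

text \<open>\<dots> and is 1/2-Lipschitz: height at most \<open>eps/2\<close> times slope at most \<open>1/eps\<close>.\<close>

lemma addm_half_lipschitz:
  assumes "0 < eps" "eps \<le> 1/2"
  shows "half_lipschitz (addm tau eps v h0 t)"
  unfolding half_lipschitz_def
proof (intro allI)
  fix a b
  show "\<bar>addm tau eps v h0 t a - addm tau eps v h0 t b\<bar> \<le> \<bar>a - b\<bar> / 2"
  proof (cases "t \<le> tau v")
    case True
    define c where "c = min (tau v - t) (eps / 2)"
    have c: "0 \<le> c" "c \<le> eps / 2" using True assms unfolding c_def by (auto simp: min_def)
    have "\<bar>addm tau eps v h0 t a - addm tau eps v h0 t b\<bar>
        = c * \<bar>addf eps (a - h0) - addf eps (b - h0)\<bar>"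
      using True c unfolding addm_def c_def[symmetric] by (simp add: abs_mult right_diff_distrib[symmetric])
    also have "\<dots> \<le> c * (\<bar>a - b\<bar> / eps)"
      using addf_lipschitz[OF assms, of "a - h0" "b - h0"] c by (intro mult_left_mono) auto
    also have "\<dots> \<le> (eps / 2) * (\<bar>a - b\<bar> / eps)"
      using mult_right_mono[OF c(2), of "\<bar>a - b\<bar> / eps"] assms by simp
    also have "\<dots> = \<bar>a - b\<bar> / 2" using assms by simp
    finally show ?thesis .
  next
    case False
    then show ?thesis unfolding addm_def by simp
  qed
qed

section \<open>The algorithm with a step-dependent input\<close>

lemma add_step_unfold:
  assumes "add_choose ord phi (UNIV - set Ps) tk = P"
  shows "add_step E ord tau eps phi (Ps, S, tk) = (Ps @ [P], S(P := tk P (phi P)),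
    \<lambda>v h. if v \<in> set (Ps @ [P]) \<or> (v, P) \<notin> E then tk v h
          else min (tk v h) (addm tau eps v (phi P) (tk P (phi P)) h))"
  unfolding add_step_def Let_def prod.case assms ..

lemma add_choose_cong:
  assumes "\<And>v. tk v (phi v) = tk' v (phi' v)"
  shows "add_choose ord phi R tk = add_choose ord phi' R tk'"
  unfolding add_choose_def assms ..

locale addition_algorithm =
  fixes E :: "('v::finite \<times> 'v) set" and ord :: "('v \<times> 'v) set"
    and tau :: "'v \<Rightarrow> real" and eps :: real
  assumes ord_linear: "linear_order ord" and eps_pos: "0 < eps" and eps_le: "eps \<le> 1/2"
begin

lemma ord_refl: "(x, x) \<in> ord"
  using ord_linear unfolding linear_order_on_def partial_order_on_def preorder_on_def refl_on_def by blast

lemma ord_antisym: "(x, y) \<in> ord \<Longrightarrow> (y, x) \<in> ord \<Longrightarrow> x = y"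
  using ord_linear unfolding linear_order_on_def partial_order_on_def antisym_def by blast

lemma ord_trans: "(x, y) \<in> ord \<Longrightarrow> (y, z) \<in> ord \<Longrightarrow> (x, z) \<in> ord"
  using ord_linear unfolding linear_order_on_def partial_order_on_def preorder_on_def trans_def by blast

lemma ord_total: "x \<noteq> y \<Longrightarrow> (x, y) \<in> ord \<or> (y, x) \<in> ord"
  using ord_linear unfolding linear_order_on_def total_on_def by blast

lemma ord_least: "finite A \<Longrightarrow> A \<noteq> {} \<Longrightarrow> \<exists>a\<in>A. \<forall>b\<in>A. (a, b) \<in> ord"
proof (induction A rule: finite_ne_induct)
  case (singleton x)
  then show ?case using ord_refl by blast
next
  case (insert x F)
  then obtain a where a: "a \<in> F" "\<forall>b\<in>F. (a, b) \<in> ord" by blast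
  show ?case
  proof (cases "(x, a) \<in> ord")
    case True
    then show ?thesis using a ord_trans ord_refl by blast
  next
    case False
    then have "(a, x) \<in> ord" using ord_total[of x a] ord_refl by blast
    then show ?thesis using a by blast
  qed
qed

definition is_choice :: "('v \<Rightarrow> real) \<Rightarrow> 'v set \<Rightarrow> 'v \<Rightarrow> bool" where
  "is_choice val R v \<longleftrightarrow> v \<in> R \<and> (\<forall>w\<in>R. val v \<le> val w) \<and> (\<forall>w\<in>R. val w = val v \<longrightarrow> (v, w) \<in> ord)"

lemma is_choice_unique: "is_choice val R v \<Longrightarrow> is_choice val R w \<Longrightarrow> v = w"
  unfolding is_choice_def using ord_antisym by (metis order_antisym)

lemma is_choice_exists:
  assumes "R \<noteq> {}"
  shows "\<exists>v. is_choice val R v"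
proof -
  define M where "M = {w\<in>R. val w = Min (val ` R)}"
  have "Min (val ` R) \<in> val ` R" using assms by (intro Min_in) auto
  then have "M \<noteq> {}" unfolding M_def by auto
  then obtain a where "a \<in> M" "\<forall>b\<in>M. (a, b) \<in> ord" using ord_least[of M] by auto
  then show ?thesis unfolding is_choice_def M_def by (intro exI[of _ a]) auto
qed

lemma add_choose_eq:
  assumes "is_choice (\<lambda>v. tk v (phi v)) R P"
  shows "add_choose ord phi R tk = P"
  unfolding add_choose_def
  using assms is_choice_unique[OF assms] unfolding is_choice_def by (intro the_equality) blast+

lemma add_choose_is_choice:
  assumes "R \<noteq> {}"
  shows "is_choice (\<lambda>v. tk v (phi v)) R (add_choose ord phi R tk)"
  using is_choice_exists[OF assms] add_choose_eq by metis

text \<open>The algorithm fed at step \<open>k\<close> (counted from 0) with the heights \<open>X k\<close>.  With a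
  constant input this is \<open>add_run\<close>; the decoding run below uses a varying one.\<close>

primrec run :: "(nat \<Rightarrow> 'v \<Rightarrow> real) \<Rightarrow> nat \<Rightarrow> 'v add_state" where
  "run X 0 = ([], (\<lambda>_. 0), (\<lambda>v h. tau v))"
| "run X (Suc k) = add_step E ord tau eps (X k) (run X k)"

text \<open>With 0-based steps: \<open>chosen X k = [P_1,\<dots>,P_k]\<close>, \<open>svals X k\<close> the map \<open>P_j \<mapsto> s_j\<close>,
  \<open>tauk X k = \<tau>_{k+1}\<close>, \<open>vtx X k = P_{k+1}\<close> and \<open>sk X k = s_{k+1}\<close>.\<close>

definition chosen :: "(nat \<Rightarrow> 'v \<Rightarrow> real) \<Rightarrow> nat \<Rightarrow> 'v list" where
  "chosen X k = fst (run X k)"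

definition svals :: "(nat \<Rightarrow> 'v \<Rightarrow> real) \<Rightarrow> nat \<Rightarrow> 'v \<Rightarrow> real" where
  "svals X k = fst (snd (run X k))"

definition tauk :: "(nat \<Rightarrow> 'v \<Rightarrow> real) \<Rightarrow> nat \<Rightarrow> 'v \<Rightarrow> real \<Rightarrow> real" where
  "tauk X k = snd (snd (run X k))"

definition vtx :: "(nat \<Rightarrow> 'v \<Rightarrow> real) \<Rightarrow> nat \<Rightarrow> 'v" where
  "vtx X k = add_choose ord (X k) (UNIV - set (chosen X k)) (tauk X k)"

definition sk :: "(nat \<Rightarrow> 'v \<Rightarrow> real) \<Rightarrow> nat \<Rightarrow> real" where
  "sk X k = tauk X k (vtx X k) (X k (vtx X k))"

lemma run_components: "run X k = (chosen X k, svals X k, tauk X k)"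
  unfolding chosen_def svals_def tauk_def by simp

lemma run_Suc_components: "run X (Suc k) = (chosen X k @ [vtx X k], (svals X k)(vtx X k := sk X k),
    \<lambda>v h. if v \<in> set (chosen X k @ [vtx X k]) \<or> (v, vtx X k) \<notin> E then tauk X k v h
          else min (tauk X k v h) (addm tau eps v (X k (vtx X k)) (sk X k) h))"
  unfolding run.simps(2) run_components[of X k] add_step_unfold[OF vtx_def[symmetric]] sk_def ..

lemma chosen_Suc: "chosen X (Suc k) = chosen X k @ [vtx X k]"
  unfolding chosen_def[of X "Suc k"] run_Suc_components by simp

lemma svals_Suc: "svals X (Suc k) = (svals X k)(vtx X k := sk X k)"
  unfolding svals_def[of X "Suc k"] run_Suc_components by simp

lemma tauk_Suc: "tauk X (Suc k) v h = (if v \<in> set (chosen X (Suc k)) \<or> (v, vtx X k) \<notin> E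
    then tauk X k v h else min (tauk X k v h) (addm tau eps v (X k (vtx X k)) (sk X k) h))"
  unfolding tauk_def[of X "Suc k"] run_Suc_components chosen_Suc by simp

lemma chosen_eq_map: "chosen X k = map (vtx X) [0..<k]"
  by (induction k) (simp_all add: chosen_Suc chosen_def[of X 0])

lemma distinct_chosen: "k \<le> CARD('v) \<Longrightarrow> distinct (chosen X k)"
proof (induction k)
  case 0
  then show ?case by (simp add: chosen_def)
next
  case (Suc k)
  then have dist: "distinct (chosen X k)" by simp
  have "set (chosen X k) \<noteq> UNIV"
    using distinct_card[OF dist] Suc.prems by (auto simp: chosen_eq_map)
  then have "is_choice (\<lambda>v. tauk X k v (X k v)) (UNIV - set (chosen X k)) (vtx X k)"
    unfolding vtx_def by (intro add_choose_is_choice) auto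
  then show ?case using dist unfolding is_choice_def by (simp add: chosen_Suc)
qed

lemma vtx_is_choice:
  assumes "k < CARD('v)"
  shows "is_choice (\<lambda>v. tauk X k v (X k v)) (UNIV - set (chosen X k)) (vtx X k)"
proof -
  have "card (set (chosen X k)) = k"
    using distinct_card[OF distinct_chosen] assms by (simp add: chosen_eq_map)
  then have "set (chosen X k) \<noteq> UNIV" using assms by auto
  then show ?thesis unfolding vtx_def by (intro add_choose_is_choice) auto
qed

lemma set_chosen_all: "set (chosen X (CARD('v))) = UNIV"
  using distinct_card[OF distinct_chosen[of "CARD('v)" X]] by (simp add: chosen_eq_map card_subset_eq)

lemma vtx_surj: "\<exists>j<CARD('v). vtx X j = v"
proof -
  have "vtx X ` {0..<CARD('v)} = UNIV" using set_chosen_all[of X] by (simp add: chosen_eq_map)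
  then have "v \<in> vtx X ` {0..<CARD('v)}" by simp
  then show ?thesis by auto
qed

lemma vtx_inj:
  assumes "j < CARD('v)" "k < CARD('v)" "vtx X j = vtx X k"
  shows "j = k"
proof -
  have "distinct (map (vtx X) [0..<CARD('v)])" using distinct_chosen[of "CARD('v)" X] by (simp add: chosen_eq_map)
  then have "inj_on (vtx X) {0..<CARD('v)}" by (simp add: distinct_map)
  then show ?thesis using assms(3) by (rule inj_onD) (use assms(1,2) in simp_all)
qed

lemma remaining_vtx:
  assumes "v \<notin> set (chosen X k)"
  obtains j where "k \<le> j" "j < CARD('v)" "vtx X j = v"
proof -
  obtain j where j: "j < CARD('v)" "vtx X j = v" using vtx_surj by blast
  have "vtx X j \<in> set (chosen X k)" if "j < k"
    unfolding chosen_eq_map set_map by (rule imageI) (use that in simp)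
  then have "k \<le> j" using assms j(2) by (meson not_le)
  then show ?thesis using j by (rule that)
qed

lemma svals_vtx: "j < k \<Longrightarrow> k \<le> CARD('v) \<Longrightarrow> svals X k (vtx X j) = sk X j"
proof (induction k)
  case 0
  then show ?case by simp
next
  case (Suc k)
  then show ?case using vtx_inj[of k j X] by (cases "j = k") (auto simp: svals_Suc)
qed

lemma tauk_frozen: "j < k \<Longrightarrow> tauk X k (vtx X j) = tauk X j (vtx X j)"
proof (induction k)
  case 0
  then show ?case by simp
next
  case (Suc k)
  have "vtx X j \<in> set (chosen X (Suc k))"
    using Suc.prems by (auto simp: chosen_eq_map less_Suc_eq)
  then have "tauk X (Suc k) (vtx X j) = tauk X k (vtx X j)" by (simp add: tauk_Suc fun_eq_iff)
  then show ?case using Suc by (cases "j = k") auto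
qed

lemma tauk_Suc_le: "tauk X (Suc k) v h \<le> tauk X k v h"
  by (simp add: tauk_Suc)

lemma tauk_antimono: "j \<le> k \<Longrightarrow> tauk X k v h \<le> tauk X j v h"
proof (induction k rule: dec_induct)
  case (step n)
  then show ?case using tauk_Suc_le[of X n v h] by linarith
qed simp

lemma tauk_Suc_cases: "tauk X (Suc k) v h = tauk X k v h \<or> sk X k \<le> tauk X (Suc k) v h"
  using addm_ge[OF eps_pos eps_le, of "sk X k" tau v] by (auto simp: tauk_Suc min_def)

lemma tauk_half_lipschitz: "half_lipschitz (tauk X k v)"
proof (induction k arbitrary: v)
  case 0
  then show ?case by (simp add: tauk_def half_lipschitz_const)
next
  case (Suc k)
  have "half_lipschitz (\<lambda>h. min (tauk X k v h) (addm tau eps v (X k (vtx X k)) (sk X k) h))"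
    by (rule half_lipschitz_min[OF Suc.IH addm_half_lipschitz[OF eps_pos eps_le]])
  then show ?case using Suc.IH
    by (cases "v \<in> set (chosen X (Suc k)) \<or> (v, vtx X k) \<notin> E") (simp_all add: tauk_Suc[abs_def])
qed

section \<open>Monotonicity of the s_k\<close>

definition stable_input :: "(nat \<Rightarrow> 'v \<Rightarrow> real) \<Rightarrow> bool" where
  "stable_input X \<longleftrightarrow> (\<forall>k v. tauk X (Suc k) v (X (Suc k) v) = tauk X k v (X (Suc k) v)
      \<longrightarrow> X k v = X (Suc k) v)"

lemma sk_mono_Suc:
  assumes stable: "stable_input X" and k: "Suc k < CARD('v)"
  shows "sk X k \<le> sk X (Suc k)"
proof -
  define P where "P = vtx X (Suc k)"
  define c where "c = X (Suc k) P"
  have "P \<notin> set (chosen X (Suc k))"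
    using vtx_is_choice[OF k, of X] unfolding is_choice_def P_def by blast
  then have "P \<in> UNIV - set (chosen X k)" by (simp add: chosen_Suc)
  then have before: "sk X k \<le> tauk X k P (X k P)"
    using vtx_is_choice[of k X] k unfolding is_choice_def sk_def by auto
  have now: "sk X (Suc k) = tauk X (Suc k) P c" unfolding sk_def P_def c_def ..
  show ?thesis
    using tauk_Suc_cases[of X k P c]
  proof
    assume "tauk X (Suc k) P c = tauk X k P c"
    then have "X k P = c" using stable unfolding stable_input_def c_def by blast
    then show ?thesis using before now \<open>tauk X (Suc k) P c = tauk X k P c\<close> by simp
  qed (use now in simp)
qed

lemma sk_mono:
  assumes "stable_input X" "k \<le> j" "j < CARD('v)"
  shows "sk X k \<le> sk X j"
  using assms(2,3)
proof (induction j rule: dec_induct)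
  case (step j)
  then show ?case using sk_mono_Suc[OF assms(1), of j] by simp
qed simp

lemma run_Suc_agree:
  assumes k: "k < CARD('v)" and same: "run X k = run Y k"
    and at_vtx: "Y k (vtx X k) = X k (vtx X k)"
    and above: "\<And>w. w \<notin> set (chosen X k) \<Longrightarrow> sk X k \<le> tauk X k w (Y k w)"
    and tie: "\<And>w. w \<notin> set (chosen X k) \<Longrightarrow> tauk X k w (Y k w) = sk X k \<Longrightarrow> tauk X k w (X k w) = sk X k"
  shows "run X (Suc k) = run Y (Suc k)"
proof -
  have choice_X: "is_choice (\<lambda>v. tauk X k v (X k v)) (UNIV - set (chosen X k)) (vtx X k)"
    by (rule vtx_is_choice[OF k])
  have at_vtx_level: "tauk X k (vtx X k) (Y k (vtx X k)) = sk X k"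
    unfolding sk_def at_vtx ..
  have "is_choice (\<lambda>v. tauk X k v (Y k v)) (UNIV - set (chosen X k)) (vtx X k)"
    unfolding is_choice_def
  proof (intro conjI ballI impI)
    show "vtx X k \<in> UNIV - set (chosen X k)" using choice_X unfolding is_choice_def by blast
  next
    fix w
    assume w: "w \<in> UNIV - set (chosen X k)"
    then show "tauk X k (vtx X k) (Y k (vtx X k)) \<le> tauk X k w (Y k w)"
      using above at_vtx_level by simp
    assume "tauk X k w (Y k w) = tauk X k (vtx X k) (Y k (vtx X k))"
    then have "tauk X k w (X k w) = tauk X k (vtx X k) (X k (vtx X k))"
      using tie w at_vtx_level unfolding sk_def by simp
    then show "(vtx X k, w) \<in> ord" using choice_X w unfolding is_choice_def by blast
  qed
  then have choose_Y: "add_choose ord (Y k) (UNIV - set (chosen X k)) (tauk X k) = vtx X k"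
    by (rule add_choose_eq)
  have "run Y (Suc k) = add_step E ord tau eps (Y k) (chosen X k, svals X k, tauk X k)"
    using same by (simp add: run_components[of X k])
  also have "\<dots> = run X (Suc k)"
    unfolding add_step_unfold[OF choose_Y] run_Suc_components at_vtx sk_def ..
  finally show ?thesis by simp
qed

section \<open>The decoding run\<close>

definition decode :: "('v \<Rightarrow> real) \<Rightarrow> ('v \<Rightarrow> real \<Rightarrow> real) \<Rightarrow> 'v \<Rightarrow> real" where
  "decode psi tk v = shift_inv (tk v) (psi v)"

primrec decoding_run :: "('v \<Rightarrow> real) \<Rightarrow> nat \<Rightarrow> 'v add_state" where
  "decoding_run psi 0 = ([], (\<lambda>_. 0), (\<lambda>v h. tau v))"
| "decoding_run psi (Suc k) =
     add_step E ord tau eps (decode psi (snd (snd (decoding_run psi k)))) (decoding_run psi k)"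

definition decoded :: "('v \<Rightarrow> real) \<Rightarrow> nat \<Rightarrow> 'v \<Rightarrow> real" where
  "decoded psi k = decode psi (snd (snd (decoding_run psi k)))"

lemma decoding_run_eq: "decoding_run psi k = run (decoded psi) k"
  by (induction k) (simp_all add: decoded_def)

lemma decoded_eq: "decoded psi k = decode psi (tauk (decoded psi) k)"
  by (simp only: decoded_def[of psi k] tauk_def decoding_run_eq)

lemma decoded_solves: "decoded psi k v + tauk (decoded psi) k v (decoded psi k v) = psi v"
  unfolding decoded_eq[of psi k] decode_def by (rule shift_inv_eq[OF tauk_half_lipschitz])

lemma decoded_unique:
  "h + tauk (decoded psi) k v h = psi v \<Longrightarrow> decoded psi k v = h"
  unfolding decoded_eq[of psi k] decode_def by (rule shift_inv_unique[OF tauk_half_lipschitz])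

lemma stable_decoded: "stable_input (decoded psi)"
  unfolding stable_input_def
proof (intro allI impI)
  fix k v
  assume "tauk (decoded psi) (Suc k) v (decoded psi (Suc k) v) = tauk (decoded psi) k v (decoded psi (Suc k) v)"
  then have "decoded psi (Suc k) v + tauk (decoded psi) k v (decoded psi (Suc k) v) = psi v"
    using decoded_solves[of psi "Suc k" v] by simp
  then show "decoded psi k v = decoded psi (Suc k) v" by (rule decoded_unique)
qed

lemma stable_const: "stable_input (\<lambda>_. phi)"
  unfolding stable_input_def by simp

definition Tplus_inv :: "('v \<Rightarrow> real) \<Rightarrow> ('v \<Rightarrow> real)" where
  "Tplus_inv psi = decode psi (tauk (decoded psi) (CARD('v)))"

lemma Tplus_inv_vtx:
  assumes "j < CARD('v)"
  shows "Tplus_inv psi (vtx (decoded psi) j) = decoded psi j (vtx (decoded psi) j)"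
  unfolding Tplus_inv_def decode_def tauk_frozen[OF assms] decoded_eq[of psi j] ..

lemma run_const: "add_run E ord tau eps phi k = run (\<lambda>_. phi) k"
  by (induction k) (simp_all add: add_run_def)

lemma Tplus_vtx:
  assumes "j < CARD('v)"
  shows "Tplus E ord tau eps phi (vtx (\<lambda>_. phi) j) = phi (vtx (\<lambda>_. phi) j) + sk (\<lambda>_. phi) j"
  using svals_vtx[OF assms] unfolding Tplus_def run_const svals_def[symmetric] by simp

section \<open>Decoding inverts T^+\<close>

lemma decoding_run_Tplus:
  assumes psi: "psi = Tplus E ord tau eps phi"
  shows "k \<le> CARD('v) \<Longrightarrow> run (\<lambda>_. phi) k = run (decoded psi) k"
proof (induction k)
  case (Suc k)
  define F where "F = (\<lambda>_::nat. phi)"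
  define T where "T = tauk F k"
  have k: "k < CARD('v)" and same: "run F k = run (decoded psi) k" using Suc unfolding F_def by auto
  have T: "tauk (decoded psi) k = T" using same unfolding T_def tauk_def by simp
  have solves: "decoded psi k w + T w (decoded psi k w) = psi w" for w
    using decoded_solves[of psi k w] T by simp
  have unique: "h + T w h = psi w \<Longrightarrow> decoded psi k w = h" for h w
    using decoded_unique[of h psi k w] T by simp
  have targets: "psi w = phi w + sk F j" if "vtx F j = w" "j < CARD('v)" for w j
    using Tplus_vtx[of j phi] that psi unfolding F_def by simp
  show ?case
    unfolding F_def[symmetric]
  proof (rule run_Suc_agree[OF k same])
    show "decoded psi k (vtx F k) = F k (vtx F k)"
      by (rule unique) (use targets[OF refl k] in \<open>simp add: sk_def T_def F_def\<close>)
  next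
    fix w
    assume "w \<notin> set (chosen F k)"
    then obtain j where j: "k \<le> j" "j < CARD('v)" "vtx F j = w" by (rule remaining_vtx)
    have "sk F j \<le> T w (phi w)"
      using tauk_antimono[OF j(1)] j(3) unfolding sk_def T_def F_def by blast
    then have "psi w \<le> phi w + T w (phi w)" using targets[OF j(3,2)] by simp
    then have le: "decoded psi k w \<le> phi w"
      unfolding decoded_eq[of psi k] decode_def T T_def by (rule shift_inv_le[OF tauk_half_lipschitz])
    have mono: "sk F k \<le> sk F j" using sk_mono[OF stable_const j(1,2)] unfolding F_def .
    show "sk F k \<le> tauk F k w (decoded psi k w)"
      using solves[of w] targets[OF j(3,2)] le mono unfolding T_def by simp
    assume "tauk F k w (decoded psi k w) = sk F k"
    then have "decoded psi k w = phi w"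
      using solves[of w] targets[OF j(3,2)] le mono unfolding T_def by simp
    then show "tauk F k w (F k w) = sk F k"
      using \<open>tauk F k w (decoded psi k w) = sk F k\<close> unfolding F_def by simp
  qed
qed simp

lemma Tplus_inv_Tplus: "Tplus_inv (Tplus E ord tau eps phi) = phi"
proof
  fix v
  define psi where "psi = Tplus E ord tau eps phi"
  define F where "F = (\<lambda>_::nat. phi)"
  obtain j where j: "j < CARD('v)" "vtx F j = v" using vtx_surj by blast
  have "tauk (decoded psi) (CARD('v)) = tauk F (CARD('v))"
    using decoding_run_Tplus[OF psi_def, of "CARD('v)"] unfolding tauk_def F_def by simp
  then have "tauk (decoded psi) (CARD('v)) v = tauk F j v" using tauk_frozen[OF j(1), of F] j(2) by simp
  moreover have "phi v + tauk F j v (phi v) = psi v"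
    using Tplus_vtx[of j phi] j unfolding psi_def sk_def F_def by simp
  ultimately have "phi v + tauk (decoded psi) (CARD('v)) v (phi v) = psi v" by simp
  then show "Tplus_inv psi v = phi v"
    unfolding Tplus_inv_def decode_def by (rule shift_inv_unique[OF tauk_half_lipschitz])
qed

lemma run_Tplus_inv: "k \<le> CARD('v) \<Longrightarrow> run (decoded psi) k = run (\<lambda>_. Tplus_inv psi) k"
proof (induction k)
  case (Suc k)
  define D where "D = decoded psi"
  define phi where "phi = Tplus_inv psi"
  define T where "T = tauk D k"
  have k: "k < CARD('v)" and same: "run D k = run (\<lambda>_. phi) k" using Suc unfolding D_def phi_def by auto
  have heights: "phi w = D j w" if "vtx D j = w" "j < CARD('v)" for w j
    using Tplus_inv_vtx[of j psi] that unfolding phi_def D_def by simp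
  show ?case
    unfolding D_def[symmetric] phi_def[symmetric]
  proof (rule run_Suc_agree[OF k same])
    show "phi (vtx D k) = D k (vtx D k)" using heights[OF refl k] .
  next
    fix w
    assume "w \<notin> set (chosen D k)"
    then obtain j where j: "k \<le> j" "j < CARD('v)" "vtx D j = w" by (rule remaining_vtx)
    have later: "sk D j = tauk D j w (phi w)" unfolding sk_def j(3) heights[OF j(3,2)] ..
    have le: "tauk D j w (phi w) \<le> T w (phi w)" unfolding T_def by (rule tauk_antimono[OF j(1)])
    have mono: "sk D k \<le> sk D j" using sk_mono[OF stable_decoded j(1,2)] unfolding D_def .
    show "sk D k \<le> tauk D k w (phi w)" using later le mono unfolding T_def by simp
    assume tie: "tauk D k w (phi w) = sk D k"
    have "phi w + tauk D j w (phi w) = psi w"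
      using decoded_solves[of psi j w] heights[OF j(3,2)] unfolding D_def by simp
    then have "phi w + T w (phi w) = psi w" using tie later le mono unfolding T_def by simp
    then have "D k w = phi w" unfolding T_def D_def by (rule decoded_unique)
    then show "tauk D k w (D k w) = sk D k" using tie by simp
  qed
qed simp

lemma Tplus_Tplus_inv: "Tplus E ord tau eps (Tplus_inv psi) = psi"
proof
  fix v
  define D where "D = decoded psi"
  obtain j where j: "j < CARD('v)" "vtx D j = v" using vtx_surj by blast
  have "svals (\<lambda>_. Tplus_inv psi) (CARD('v)) = svals D (CARD('v))"
    using run_Tplus_inv[of "CARD('v)" psi] unfolding svals_def D_def by simp
  then have "svals (\<lambda>_. Tplus_inv psi) (CARD('v)) v = sk D j" using svals_vtx[OF j(1), of D] j(2) by simp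
  moreover have "Tplus_inv psi v = D j v" using Tplus_inv_vtx[OF j(1), of psi] j(2) unfolding D_def by simp
  moreover have "D j v + tauk D j v (D j v) = psi v" unfolding D_def by (rule decoded_solves)
  ultimately show "Tplus E ord tau eps (Tplus_inv psi) v = psi v"
    unfolding Tplus_def run_const svals_def[symmetric] sk_def j(2) by simp
qed

lemma bij_Tplus: "bij (Tplus E ord tau eps)"
  using o_bij[of Tplus_inv "Tplus E ord tau eps"] Tplus_inv_Tplus Tplus_Tplus_inv
  by (simp add: comp_def fun_eq_iff id_def)

section \<open>Symmetry\<close>

text \<open>The run on \<open>-phi\<close> chooses the same vertices with the same \<open>s_k\<close>, and its \<open>\<tau>\<close> is
  the reflection of the \<open>\<tau>\<close> of the run on \<open>phi\<close>, because \<open>f\<close> is even.\<close>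

lemma run_reflect:
  "run (\<lambda>_. - phi) k = (chosen (\<lambda>_. phi) k, svals (\<lambda>_. phi) k, \<lambda>v h. tauk (\<lambda>_. phi) k v (- h))"
proof (induction k)
  case 0
  then show ?case by (simp add: chosen_def svals_def tauk_def)
next
  case (Suc k)
  define F where "F = (\<lambda>_::nat. phi)"
  have choice: "add_choose ord (- phi) (UNIV - set (chosen F k)) (\<lambda>v h. tauk F k v (- h)) = vtx F k"
    unfolding vtx_def by (rule add_choose_cong) (simp add: F_def)
  have "run (\<lambda>_. - phi) (Suc k)
      = add_step E ord tau eps (- phi) (chosen F k, svals F k, \<lambda>v h. tauk F k v (- h))"
    by (simp only: run.simps Suc.IH F_def)
  also have "\<dots> = (chosen F (Suc k), svals F (Suc k), \<lambda>v h. tauk F (Suc k) v (- h))"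
    unfolding add_step_unfold[OF choice] chosen_Suc svals_Suc
    by (simp add: tauk_Suc chosen_Suc sk_def F_def addm_reflect[OF eps_pos eps_le] fun_eq_iff)
  finally show ?case unfolding F_def .
qed

lemma Tminus_reflect: "Tminus E ord tau eps phi = - Tplus E ord tau eps (- phi)"
proof -
  have "svals (\<lambda>_. - phi) (CARD('v)) = svals (\<lambda>_. phi) (CARD('v))"
    unfolding svals_def[of "\<lambda>_. - phi"] run_reflect by simp
  then show ?thesis unfolding Tminus_def Tplus_def run_const svals_def[symmetric] by (simp add: fun_eq_iff)
qed

end

theorem mainTheorem7:
  fixes E :: "('v::finite \<times> 'v) set" and ord :: "('v \<times> 'v) set"
    and tau :: "'v \<Rightarrow> real" and eps :: real
  assumes sym_E: "sym E"
    and connected: "\<forall>v w. (v, w) \<in> E\<^sup>*"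
    and ord: "linear_order ord"
    and tau_nonneg: "\<forall>v. tau v \<ge> 0"
    and eps_pos: "0 < eps" and eps_le: "eps \<le> 1/2"
  shows "bij (Tplus E ord tau eps) \<and> bij (Tminus E ord tau eps)
    \<and> (\<forall>phi. Tminus E ord tau eps phi = - Tplus E ord tau eps (- phi))"
proof -
  interpret addition_algorithm E ord tau eps
    using ord eps_pos eps_le by unfold_locales
  have reflect: "Tminus E ord tau eps = uminus \<circ> Tplus E ord tau eps \<circ> uminus"
    by (simp add: fun_eq_iff Tminus_reflect)
  have "bij (uminus :: ('v \<Rightarrow> real) \<Rightarrow> ('v \<Rightarrow> real))"
    by (rule o_bij[of uminus]) (simp_all add: fun_eq_iff)
  then have "bij (Tminus E ord tau eps)" unfolding reflect by (intro bij_comp bij_Tplus)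
  then show ?thesis using bij_Tplus Tminus_reflect by blast
qed

end
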